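(* Let $\rho\colon\mathcal{F}\to[\Lambda]^\omega$ with $\mathcal{F}\subseteq[\Omega]^\omega$ be a partition regular function. (1) If $\rho_{\mathsf{BI}}\leq_K\rho$, then $\rho\notin P^-_2(\Lambda)$. If moreover $\rho\in(S_1)$, then $\rho_{\mathsf{BI}}\leq_K\rho$ if and only if $\rho\notin P^-_2(\Lambda)$. (2) If $\omega^2+1\in\mathrm{FinBW}(\rho)$, then $\rho\in P^-_2(\Lambda)$. If moreover $\rho\in(S_2)$, then $\rho\in P^-_2(\Lambda)$ if and only if $\omega^2+1\in\mathrm{FinBW}(\rho)$, where the ordinal $\omega^2+1$ carries the order topology.
   Context: All topological spaces are Hausdorff. An ideal on a nonempty set $X$ is a family $\mathcal{I}\subseteq\mathcal{P}(X)$ with $\emptyset\in\mathcal{I}$, $X\notin\mathcal{I}$, closed under finite unions and subsets, containing all finite subsets; $\mathcal{I}^+=\mathcal{P}(X)\setminus\mathcal{I}$. Partition regular function: $\Lambda,\Omega$ countably infinite, $\mathcal{F}$ a nonempty family of infinite subsets of $\Omega$ with $F\setminus K\in\mathcal{F}$ for $F\in\mathcal{F}$, $K$ finite; $\rho\colon\mathcal{F}\to[\Lambda]^\omega$ is partition regular if (M) $E\subseteq F\Rightarrow\rho(E)\subseteq\rho(F)$; (R) if $F\in\mathcal{F}$ and $\rho(F)=A\cup B$ then some $E\in\mathcal{F}$ has $\rho(E)\subseteq A$ or $\rho(E)\subseteq B$; (S) for every $E\in\mathcal{F}$ there is $F\in\mathcal{F}$, $F\subseteq E$, such that every $a\in\rho(F)$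 satisfies $a\notin\rho(F\setminus K)$ for some finite $K\subseteq\Omega$. $\mathcal{I}_\rho=\{A\subseteq\Lambda:\forall F\in\mathcal{F}\ \rho(F)\not\subseteq A\}$. For an ideal $\mathcal{I}$ on a countable set $\Lambda$, $\rho_{\mathcal{I}}\colon\mathcal{I}^+\to[\Lambda]^\omega$, $\rho_{\mathcal{I}}(A)=A$ (with $\Omega=\Lambda$). $\rho$-convergence and $\mathrm{FinBW}(\rho)$: for $f\colon\Lambda\to X$ and $F\in\mathcal{F}$, $f\restriction\rho(F)$ $\rho$-converges to $x$ if for every neighborhood $U$ of $x$ there is a finite $K\subseteq\Omega$ with $f[\rho(F\setminus K)]\subseteq U$; $\mathrm{FinBW}(\rho)$ is the class of spaces $X$ such that for every $f\colon\Lambda\to X$ some $F\in\mathcal{F}$ makes $f\restriction\rho(F)$ $\rho$-convergent to some point of $X$. Katětov order: $\rho_2\leq_K\rho_1$ (for $\rho_i\colon\mathcal{F}_i\to[\Lambda_i]^\omega$, $\mathcal{F}_i\subseteq[\Omega_i]^\omega$) if there is $f\colon\Lambda_1\to\Lambda_2$ such that for every $F_1\in\mathcal{F}_1$ there is $F_2\in\mathcal{F}_2$ such that for every finite $K_1\subseteq\Omega_1$ there is a finite $K_2\subseteq\Omega_2$ with $\rho_2(F_2\setminus K_2)\subseteq f[\rho_1(F_1\setminus K_1)]$. $\mathrm{FIN}^2$ on $\omega^2$: $A\in\mathrm{FIN}^2$ iff there is $i_0$ with $\{j:(i,j)\in A\}$ finite for all $i\ge i_0$. $\mathsf{BI}$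 is the ideal on $\omega^3$: $A\in\mathsf{BI}$ iff there is $i_0$ such that $\{(j,k):(i,j,k)\in A\}\in\mathrm{FIN}^2$ for all $i<i_0$ and $\{(j,k):(i,j,k)\in A\}$ is finite for all $i\geq i_0$. $\rho\in P^-_2(\Lambda)$ means: for every partition $\{A_{i,j}:i,j\in\omega\}$ of $\Lambda$ with all $A_{i,j}\in\mathcal{I}_\rho$ there is $F\in\mathcal{F}$ such that (a) for all $i,j$ there is a finite $K\subseteq\Omega$ with $\rho(F\setminus K)\cap A_{i,j}=\emptyset$, and (b) there is $i_0$ such that for all $i>i_0$ there is a finite $K\subseteq\Omega$ with $\rho(F\setminus K)\cap\bigcup_{j}A_{i,j}=\emptyset$. $\rho\in(S_1)$: for every $E\in\mathcal{F}$ there is $F\in\mathcal{F}$, $F\subseteq E$, such that for every $A\in\mathcal{I}_\rho$ there is $G\in\mathcal{F}$ with $\rho(G)\subseteq\rho(F)\setminus A$ and for every finite $K$ there is a finite $L$ with $\rho(G\setminus L)\subseteq\rho(F\setminus K)$. $\rho\in(S_2)$: for every $E\in\mathcal{F}$ there is $F\in\mathcal{F}$, $F\subseteq E$, such that for every $B\subseteq\rho(F)$ with $B\notin\mathcal{I}_\rho$ there is $G\in\mathcal{F}$ with $\rho(G)\subseteq B$ and for every finite $K$ there is a finite $L$ with $\rho(G\setminus L)\subseteq\rho(F\setminus K)$. *)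

theory Defs
  imports "HOL-Analysis.Analysis"
begin

text \<open>Lambda and Omega are the (countably infinite) universes of the type variables 'l and 'o.
  Fam is the family F of (infinite) subsets of Omega, rho is the function F -> [Lambda]^omega.
  Values of rho outside Fam are irrelevant.\<close>

definition partition_regular :: "'o set set \<Rightarrow> ('o set \<Rightarrow> 'l set) \<Rightarrow> bool" where
  "partition_regular Fam rho \<longleftrightarrow>
     Fam \<noteq> {} \<and>
     (\<forall>F\<in>Fam. infinite F) \<and>
     (\<forall>F\<in>Fam. \<forall>K. finite K \<longrightarrow> F - K \<in> Fam) \<and>
     (\<forall>F\<in>Fam. infinite (rho F)) \<and>
     \<comment> \<open>(M)\<close>
     (\<forall>E\<in>Fam. \<forall>F\<in>Fam. E \<subseteq> F \<longrightarrow> rho E \<subseteq> rho F) \<and>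
     \<comment> \<open>(R)\<close>
     (\<forall>F\<in>Fam. \<forall>A B. rho F = A \<union> B \<longrightarrow> (\<exists>E\<in>Fam. rho E \<subseteq> A \<or> rho E \<subseteq> B)) \<and>
     \<comment> \<open>(S)\<close>
     (\<forall>E\<in>Fam. \<exists>F\<in>Fam. F \<subseteq> E \<and>
        (\<forall>a\<in>rho F. \<exists>K. finite K \<and> a \<notin> rho (F - K)))"

definition I_rho :: "'o set set \<Rightarrow> ('o set \<Rightarrow> 'l set) \<Rightarrow> 'l set set" where
  "I_rho Fam rho = {A. \<forall>F\<in>Fam. \<not> rho F \<subseteq> A}"

text \<open>katetov_le Fam2 rho2 Fam1 rho1 means rho2 \<le>_K rho1.\<close>

definition katetov_le ::
  "'o2 set set \<Rightarrow> ('o2 set \<Rightarrow> 'l2 set) \<Rightarrow> 'o1 set set \<Rightarrow> ('o1 set \<Rightarrow> 'l1 set) \<Rightarrow> bool" where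
  "katetov_le Fam2 rho2 Fam1 rho1 \<longleftrightarrow>
     (\<exists>f :: 'l1 \<Rightarrow> 'l2. \<forall>F1\<in>Fam1. \<exists>F2\<in>Fam2. \<forall>K1. finite K1 \<longrightarrow>
        (\<exists>K2. finite K2 \<and> rho2 (F2 - K2) \<subseteq> f ` rho1 (F1 - K1)))"

definition FIN2 :: "(nat \<times> nat) set set" where
  "FIN2 = {A. \<exists>i0. \<forall>i\<ge>i0. finite {j. (i, j) \<in> A}}"

definition BI :: "(nat \<times> nat \<times> nat) set set" where
  "BI = {A. \<exists>i0. (\<forall>i<i0. {(j, k). (i, j, k) \<in> A} \<in> FIN2) \<and>
                 (\<forall>i\<ge>i0. finite {(j, k). (i, j, k) \<in> A})}"

text \<open>rho_I for an ideal I on a countable set: domain I^+, identity map.\<close>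

definition ideal_plus :: "'a set set \<Rightarrow> 'a set set" where
  "ideal_plus I = {A. A \<notin> I}"

definition rho_ideal :: "'a set \<Rightarrow> 'a set" where
  "rho_ideal A = A"

definition P2_minus :: "'o set set \<Rightarrow> ('o set \<Rightarrow> 'l set) \<Rightarrow> bool" where
  "P2_minus Fam rho \<longleftrightarrow>
     (\<forall>A :: nat \<Rightarrow> nat \<Rightarrow> 'l set.
        ((\<forall>i j i' j'. (i, j) \<noteq> (i', j') \<longrightarrow> A i j \<inter> A i' j' = {}) \<and>
         (\<Union>i. \<Union>j. A i j) = UNIV \<and>
         (\<forall>i j. A i j \<in> I_rho Fam rho))
        \<longrightarrow> (\<exists>F\<in>Fam.
               (\<forall>i j. \<exists>K. finite K \<and> rho (F - K) \<inter> A i j = {}) \<and>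
               (\<exists>i0. \<forall>i>i0. \<exists>K. finite K \<and> rho (F - K) \<inter> (\<Union>j. A i j) = {})))"

definition S1 :: "'o set set \<Rightarrow> ('o set \<Rightarrow> 'l set) \<Rightarrow> bool" where
  "S1 Fam rho \<longleftrightarrow>
     (\<forall>E\<in>Fam. \<exists>F\<in>Fam. F \<subseteq> E \<and>
        (\<forall>A\<in>I_rho Fam rho. \<exists>G\<in>Fam. rho G \<subseteq> rho F - A \<and>
           (\<forall>K. finite K \<longrightarrow> (\<exists>L. finite L \<and> rho (G - L) \<subseteq> rho (F - K)))))"

definition S2 :: "'o set set \<Rightarrow> ('o set \<Rightarrow> 'l set) \<Rightarrow> bool" where
  "S2 Fam rho \<longleftrightarrow>
     (\<forall>E\<in>Fam. \<exists>F\<in>Fam. F \<subseteq> E \<and>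
        (\<forall>B. B \<subseteq> rho F \<and> B \<notin> I_rho Fam rho \<longrightarrow> (\<exists>G\<in>Fam. rho G \<subseteq> B \<and>
           (\<forall>K. finite K \<longrightarrow> (\<exists>L. finite L \<and> rho (G - L) \<subseteq> rho (F - K))))))"

definition rho_converges ::
  "'x topology \<Rightarrow> ('o set \<Rightarrow> 'l set) \<Rightarrow> ('l \<Rightarrow> 'x) \<Rightarrow> 'o set \<Rightarrow> 'x \<Rightarrow> bool" where
  "rho_converges X rho f F x \<longleftrightarrow>
     (\<forall>U. openin X U \<and> x \<in> U \<longrightarrow> (\<exists>K. finite K \<and> f ` rho (F - K) \<subseteq> U))"

definition FinBW :: "'o set set \<Rightarrow> ('o set \<Rightarrow> 'l set) \<Rightarrow> 'x topology \<Rightarrow> bool" where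
  "FinBW Fam rho X \<longleftrightarrow>
     (\<forall>f :: 'l \<Rightarrow> 'x. f ` UNIV \<subseteq> topspace X \<longrightarrow>
        (\<exists>F\<in>Fam. \<exists>x\<in>topspace X. rho_converges X rho f F x))"

text \<open>Pt i j represents the ordinal omega*i + j, Top represents omega^2.\<close>

datatype omega2p1 = Pt nat nat | Top

instantiation omega2p1 :: linorder
begin

fun less_eq_omega2p1 :: "omega2p1 \<Rightarrow> omega2p1 \<Rightarrow> bool" where
  "less_eq_omega2p1 _ Top = True"
| "less_eq_omega2p1 Top (Pt _ _) = False"
| "less_eq_omega2p1 (Pt i j) (Pt k l) = (i < k \<or> (i = k \<and> j \<le> l))"

definition less_omega2p1 :: "omega2p1 \<Rightarrow> omega2p1 \<Rightarrow> bool" where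
  "less_omega2p1 x y \<longleftrightarrow> x \<le> y \<and> \<not> y \<le> x"

instance
proof
  fix x y z :: omega2p1
  show "x < y \<longleftrightarrow> x \<le> y \<and> \<not> y \<le> x" by (simp add: less_omega2p1_def)
  show "x \<le> x" by (cases x) auto
  show "x \<le> y \<Longrightarrow> y \<le> z \<Longrightarrow> x \<le> z"
    by (cases x; cases y; cases z) auto
  show "x \<le> y \<Longrightarrow> y \<le> x \<Longrightarrow> x = y"
    by (cases x; cases y) auto
  show "x \<le> y \<or> y \<le> x"
    by (cases x; cases y) auto
qed

end

instantiation omega2p1 :: linorder_topology
begin

definition open_omega2p1 :: "omega2p1 set \<Rightarrow> bool" where
  "open_omega2p1 = generate_topology (range lessThan \<union> range greaterThan)"

instance by standard (simp add: open_omega2p1_def)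

end

end

theory Submission
  imports Defs
begin

text \<open>
  A partition of \<open>\<Lambda>\<close> into \<open>\<I>\<^sub>\<rho>\<close>-small cells \<open>A\<^sub>i\<^sub>,\<^sub>j\<close> is a map \<open>g : \<Lambda> \<rightarrow> \<omega> \<times> \<omega>\<close>, and
  \<open>P\<^sup>-\<^sub>2\<close> asks for an \<open>F\<close> whose tails \<open>\<rho>(F \<setminus> K)\<close> eventually avoid every cell and all but
  finitely many columns.

  (1) If \<open>f\<close> is a Katetov reduction of \<open>\<rho>\<^bsub>BI\<^esub>\<close> to \<open>\<rho>\<close>, the first two coordinates of \<open>f\<close> form
  such a partition, and any witness \<open>F\<close> would produce a \<open>BI\<close>-positive set with finite rows and
  almost all columns finite, which is absurd. Conversely, given a partition without witness
  and \<open>F\<close> chosen by (S) and (S1), removing the finitely many cells that no tail of \<open>F\<close> avoids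
  would create a witness; so there are infinitely many such columns, or infinitely many such
  cells in one column. A diagonal pseudo-intersection \<open>Z\<close> of the tails of \<open>F\<close> meeting each
  of them infinitely often is mapped by (an injective refinement of) \<open>g\<close> onto a
  \<open>BI\<close>-positive set, and this gives the reduction.

  (2) Sending the cell \<open>(i, j)\<close> to the isolated point \<open>\<omega>\<cdot>i + j + 1\<close> of \<open>\<omega>\<^sup>2 + 1\<close>, a
  \<open>\<rho>\<close>-limit cannot be isolated because cells are small, so it is \<open>\<omega>\<^sup>2\<close> or some \<open>\<omega>\<cdot>(i + 1)\<close>, and
  its neighbourhoods provide the witness. Conversely, apply \<open>P\<^sup>-\<^sub>2\<close> to the fibres of a sequence
  \<open>f\<close> into \<open>\<omega>\<^sup>2 + 1\<close>; by (S2) one of the finitely many pieces (a column below the bound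
  \<open>i\<^sub>0\<close> or the final segment \<open>[\<omega>\<cdot>i\<^sub>0, \<omega>\<^sup>2]\<close>) contains some \<open>\<rho>(G)\<close>, which then converges to
  \<open>\<omega>\<cdot>(c + 1)\<close> or to \<open>\<omega>\<^sup>2\<close>.
\<close>

section \<open>Eventual avoidance along tails\<close>

definition eventually_avoids :: "('o set \<Rightarrow> 'l set) \<Rightarrow> 'o set \<Rightarrow> 'l set \<Rightarrow> bool" where
  "eventually_avoids rho F Y \<longleftrightarrow> (\<exists>K. finite K \<and> rho (F - K) \<inter> Y = {})"

definition tails_vanish :: "('o set \<Rightarrow> 'l set) \<Rightarrow> 'o set \<Rightarrow> bool" where
  "tails_vanish rho F \<longleftrightarrow> (\<forall>a. \<exists>K. finite K \<and> a \<notin> rho (F - K))"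

definition tails_refine :: "('o set \<Rightarrow> 'l set) \<Rightarrow> 'o set \<Rightarrow> 'o set \<Rightarrow> bool" where
  "tails_refine rho G F \<longleftrightarrow> (\<forall>K. finite K \<longrightarrow> (\<exists>L. finite L \<and> rho (G - L) \<subseteq> rho (F - K)))"

text \<open>The property \<open>P\<^sup>-\<^sub>2\<close> is phrased through the map \<open>g\<close> whose fibres are the cells
  \<open>A\<^sub>i\<^sub>,\<^sub>j\<close>, so that the column \<open>\<Union>\<^sub>j A\<^sub>i\<^sub>,\<^sub>j\<close> is \<open>g -` ({i} \<times> UNIV)\<close>.\<close>

definition P2_witness :: "('o set \<Rightarrow> 'l set) \<Rightarrow> ('l \<Rightarrow> nat \<times> nat) \<Rightarrow> 'o set \<Rightarrow> bool" where
  "P2_witness rho g F \<longleftrightarrow>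
     (\<forall>p. eventually_avoids rho F (g -` {p})) \<and>
     (\<exists>i0. \<forall>i>i0. eventually_avoids rho F (g -` ({i} \<times> UNIV)))"

lemma eventually_avoids_subset:
  "eventually_avoids rho F Y \<Longrightarrow> Z \<subseteq> Y \<Longrightarrow> eventually_avoids rho F Z"
  unfolding eventually_avoids_def by blast

lemma eventually_avoids_if_tails_refine:
  assumes "tails_refine rho G F" and "eventually_avoids rho F Y"
  shows "eventually_avoids rho G Y"
proof -
  obtain K where "finite K" and K: "rho (F - K) \<inter> Y = {}"
    using assms(2) unfolding eventually_avoids_def by blast
  then obtain L where "finite L" and "rho (G - L) \<subseteq> rho (F - K)"
    using assms(1) unfolding tails_refine_def by blast
  with K show ?thesis
    unfolding eventually_avoids_def by auto
qed

lemma rho_converges_avoids: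
  assumes "rho_converges X rho f F x" "openin X U" "x \<in> U"
  shows "eventually_avoids rho F (f -` (- U))"
proof -
  obtain K where "finite K" "f ` rho (F - K) \<subseteq> U"
    using assms unfolding rho_converges_def by blast
  then show ?thesis
    unfolding eventually_avoids_def by auto
qed

lemma partition_eq_fibres:
  fixes A :: "'i \<Rightarrow> 'j \<Rightarrow> 'a set"
  assumes disjoint: "\<forall>i j i' j'. (i, j) \<noteq> (i', j') \<longrightarrow> A i j \<inter> A i' j' = {}"
    and cover: "(\<Union>i. \<Union>j. A i j) = UNIV"
  obtains g where "\<And>i j. g -` {(i, j)} = A i j"
proof -
  have "\<forall>a. \<exists>p. a \<in> A (fst p) (snd p)"
  proof
    fix a
    from cover obtain i j where "a \<in> A i j"
      by blast
    then show "\<exists>p. a \<in> A (fst p) (snd p)"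
      by (intro exI[of _ "(i, j)"]) simp
  qed
  then obtain g where g: "\<And>a. a \<in> A (fst (g a)) (snd (g a))"
    by metis
  have "g -` {(i, j)} = A i j" for i j
  proof
    show "g -` {(i, j)} \<subseteq> A i j"
      using g by (metis fst_conv snd_conv subsetI vimage_singleton_eq)
    show "A i j \<subseteq> g -` {(i, j)}"
    proof
      fix a assume "a \<in> A i j"
      with g[of a] disjoint have "(fst (g a), snd (g a)) = (i, j)"
        by blast
      then show "a \<in> g -` {(i, j)}"
        by simp
    qed
  qed
  then show ?thesis
    by (rule that)
qed

lemma P2_minus_iff:
  fixes rho :: "'o set \<Rightarrow> 'l set"
  shows "P2_minus Fam rho \<longleftrightarrow>
     (\<forall>g. (\<forall>p. g -` {p} \<in> I_rho Fam rho) \<longrightarrow> (\<exists>F\<in>Fam. P2_witness rho g F))"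
proof -
  have column: "(\<Union>j. g -` {(i, j)}) = g -` ({i} \<times> UNIV)" for g :: "'l \<Rightarrow> nat \<times> nat" and i
    by auto
  have "P2_minus Fam rho \<longleftrightarrow> (\<forall>g :: 'l \<Rightarrow> nat \<times> nat. (\<forall>i j. g -` {(i, j)} \<in> I_rho Fam rho) \<longrightarrow>
      (\<exists>F\<in>Fam. (\<forall>i j. eventually_avoids rho F (g -` {(i, j)})) \<and>
        (\<exists>i0. \<forall>i>i0. eventually_avoids rho F (\<Union>j. g -` {(i, j)}))))"
  proof
    assume P2: "P2_minus Fam rho"
    show "\<forall>g :: 'l \<Rightarrow> nat \<times> nat. (\<forall>i j. g -` {(i, j)} \<in> I_rho Fam rho) \<longrightarrow>
      (\<exists>F\<in>Fam. (\<forall>i j. eventually_avoids rho F (g -` {(i, j)})) \<and>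
        (\<exists>i0. \<forall>i>i0. eventually_avoids rho F (\<Union>j. g -` {(i, j)})))"
    proof (intro allI impI)
      fix g :: "'l \<Rightarrow> nat \<times> nat"
      have "\<forall>i j i' j'. (i, j) \<noteq> (i', j') \<longrightarrow> g -` {(i, j)} \<inter> g -` {(i', j')} = {}"
        by auto
      moreover have "(\<Union>i. \<Union>j. g -` {(i, j)}) = UNIV"
        by (auto intro: prod.collapse)
      moreover assume "\<forall>i j. g -` {(i, j)} \<in> I_rho Fam rho"
      ultimately show "\<exists>F\<in>Fam. (\<forall>i j. eventually_avoids rho F (g -` {(i, j)})) \<and>
          (\<exists>i0. \<forall>i>i0. eventually_avoids rho F (\<Union>j. g -` {(i, j)}))"
        using P2[unfolded P2_minus_def eventually_avoids_def[symmetric],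
            THEN spec[of _ "\<lambda>i j. g -` {(i, j)}"]] by blast
    qed
  next
    assume maps: "\<forall>g :: 'l \<Rightarrow> nat \<times> nat. (\<forall>i j. g -` {(i, j)} \<in> I_rho Fam rho) \<longrightarrow>
      (\<exists>F\<in>Fam. (\<forall>i j. eventually_avoids rho F (g -` {(i, j)})) \<and>
        (\<exists>i0. \<forall>i>i0. eventually_avoids rho F (\<Union>j. g -` {(i, j)})))"
    show "P2_minus Fam rho"
      unfolding P2_minus_def eventually_avoids_def[symmetric]
    proof (intro allI impI, elim conjE)
      fix A :: "nat \<Rightarrow> nat \<Rightarrow> 'l set"
      assume partition: "\<forall>i j i' j'. (i, j) \<noteq> (i', j') \<longrightarrow> A i j \<inter> A i' j' = {}"
          "(\<Union>i. \<Union>j. A i j) = UNIV"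
        and "\<forall>i j. A i j \<in> I_rho Fam rho"
      obtain g where "\<And>i j. g -` {(i, j)} = A i j"
        using partition_eq_fibres[OF partition] by blast
      then show "\<exists>F\<in>Fam. (\<forall>i j. eventually_avoids rho F (A i j)) \<and>
          (\<exists>i0. \<forall>i>i0. eventually_avoids rho F (\<Union>j. A i j))"
        using maps[THEN spec[of _ g]] \<open>\<forall>i j. A i j \<in> I_rho Fam rho\<close> by simp
    qed
  qed
  then show ?thesis
    unfolding P2_witness_def column by simp
qed

locale partition_regular_fn =
  fixes Fam :: "'o set set" and rho :: "'o set \<Rightarrow> 'l set"
  assumes regular: "partition_regular Fam rho"
begin

lemma diff_finite_in_Fam: "F \<in> Fam \<Longrightarrow> finite K \<Longrightarrow> F - K \<in> Fam"
  using regular unfolding partition_regular_def by (elim conjE) simp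

lemma rho_mono: "E \<in> Fam \<Longrightarrow> F \<in> Fam \<Longrightarrow> E \<subseteq> F \<Longrightarrow> rho E \<subseteq> rho F"
  using regular unfolding partition_regular_def by (elim conjE) simp

lemma rho_nonempty: "F \<in> Fam \<Longrightarrow> rho F \<noteq> {}"
proof -
  assume "F \<in> Fam"
  then have "infinite (rho F)"
    using regular unfolding partition_regular_def by (elim conjE) simp
  then show ?thesis
    by auto
qed

lemma rho_split: "F \<in> Fam \<Longrightarrow> rho F = A \<union> B \<Longrightarrow> \<exists>E\<in>Fam. rho E \<subseteq> A \<or> rho E \<subseteq> B"
  using regular unfolding partition_regular_def by (elim conjE) simp

lemma exists_tails_vanish: "E \<in> Fam \<Longrightarrow> \<exists>F\<in>Fam. F \<subseteq> E \<and> tails_vanish rho F"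
proof -
  assume "E \<in> Fam"
  then have "\<exists>F\<in>Fam. F \<subseteq> E \<and> (\<forall>a\<in>rho F. \<exists>K. finite K \<and> a \<notin> rho (F - K))"
    using regular unfolding partition_regular_def by (elim conjE) simp
  then obtain F where F: "F \<in> Fam" "F \<subseteq> E" and S: "\<forall>a\<in>rho F. \<exists>K. finite K \<and> a \<notin> rho (F - K)"
    by blast
  have "\<exists>K. finite K \<and> a \<notin> rho (F - K)" for a
    using S by (cases "a \<in> rho F") auto
  with F show ?thesis
    unfolding tails_vanish_def by blast
qed

lemma rho_tail_antimono: "F \<in> Fam \<Longrightarrow> finite K' \<Longrightarrow> K \<subseteq> K' \<Longrightarrow> rho (F - K') \<subseteq> rho (F - K)"
  by (rule rho_mono) (auto intro: diff_finite_in_Fam finite_subset)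

lemma rho_tail_subset: "F \<in> Fam \<Longrightarrow> finite K \<Longrightarrow> rho (F - K) \<subseteq> rho F"
  using rho_tail_antimono[of F K "{}"] by simp

lemma tails_vanish_subset:
  assumes "E \<in> Fam" "F \<in> Fam" "F \<subseteq> E" "tails_vanish rho E"
  shows "tails_vanish rho F"
  unfolding tails_vanish_def
proof
  fix a
  obtain K where "finite K" "a \<notin> rho (E - K)"
    using assms(4) unfolding tails_vanish_def by blast
  moreover have "rho (F - K) \<subseteq> rho (E - K)"
    using assms \<open>finite K\<close> by (intro rho_mono diff_finite_in_Fam) auto
  ultimately show "\<exists>K. finite K \<and> a \<notin> rho (F - K)"
    by auto
qed

lemma I_rho_empty: "{} \<in> I_rho Fam rho"
  using rho_nonempty unfolding I_rho_def by auto

lemma I_rho_subset: "A \<in> I_rho Fam rho \<Longrightarrow> B \<subseteq> A \<Longrightarrow> B \<in> I_rho Fam rho"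
  unfolding I_rho_def by auto

lemma I_rho_Un:
  assumes "A \<in> I_rho Fam rho" "B \<in> I_rho Fam rho"
  shows "A \<union> B \<in> I_rho Fam rho"
  unfolding I_rho_def
proof (clarify)
  fix F assume F: "F \<in> Fam" "rho F \<subseteq> A \<union> B"
  then have "rho F = (rho F \<inter> A) \<union> (rho F \<inter> B)"
    by auto
  from rho_split[OF F(1) this] obtain E
    where "E \<in> Fam" "rho E \<subseteq> rho F \<inter> A \<or> rho E \<subseteq> rho F \<inter> B"
    by (elim bexE)
  with assms show False
    unfolding I_rho_def by auto
qed

lemma I_rho_UN:
  "finite S \<Longrightarrow> (\<And>s. s \<in> S \<Longrightarrow> A s \<in> I_rho Fam rho) \<Longrightarrow> (\<Union>s\<in>S. A s) \<in> I_rho Fam rho"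
  by (induction S rule: finite_induct) (auto intro: I_rho_Un I_rho_empty)

lemma rho_notin_I_rho: "F \<in> Fam \<Longrightarrow> rho F \<notin> I_rho Fam rho"
  unfolding I_rho_def by auto

lemma eventually_avoids_Un:
  assumes "F \<in> Fam" "eventually_avoids rho F Y" "eventually_avoids rho F Z"
  shows "eventually_avoids rho F (Y \<union> Z)"
proof -
  obtain K L where "finite K" "rho (F - K) \<inter> Y = {}" "finite L" "rho (F - L) \<inter> Z = {}"
    using assms(2,3) unfolding eventually_avoids_def by blast
  moreover have "rho (F - (K \<union> L)) \<subseteq> rho (F - K) \<inter> rho (F - L)"
    using assms(1) calculation by (simp add: rho_tail_antimono)
  ultimately show ?thesis
    unfolding eventually_avoids_def by (intro exI[of _ "K \<union> L"]) auto
qed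

lemma eventually_avoids_UN:
  assumes "F \<in> Fam" "finite S" "\<And>s. s \<in> S \<Longrightarrow> eventually_avoids rho F (Y s)"
  shows "eventually_avoids rho F (\<Union>s\<in>S. Y s)"
  using assms(2,3)
proof (induction S rule: finite_induct)
  case empty
  then show ?case
    unfolding eventually_avoids_def by auto
next
  case (insert s S)
  then show ?case
    by (simp add: eventually_avoids_Un assms(1))
qed

lemma eventually_avoids_subfamily:
  assumes "F \<in> Fam" "E \<in> Fam" "F \<subseteq> E" "eventually_avoids rho E Y"
  shows "eventually_avoids rho F Y"
proof (rule eventually_avoids_if_tails_refine[OF _ assms(4)])
  show "tails_refine rho F E"
    unfolding tails_refine_def
  proof (intro allI impI)
    fix K :: "'o set" assume "finite K"
    moreover have "rho (F - K) \<subseteq> rho (E - K)"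
      using assms \<open>finite K\<close> by (intro rho_mono diff_finite_in_Fam) auto
    ultimately show "\<exists>L. finite L \<and> rho (F - L) \<subseteq> rho (E - K)"
      by blast
  qed
qed

lemma eventually_avoids_restrict:
  assumes "F \<in> Fam" "rho F \<subseteq> W" "eventually_avoids rho F (Y \<inter> W)"
  shows "eventually_avoids rho F Y"
proof -
  obtain K where "finite K" "rho (F - K) \<inter> (Y \<inter> W) = {}"
    using assms(3) unfolding eventually_avoids_def by blast
  moreover have "rho (F - K) \<subseteq> W"
    using rho_tail_subset[OF assms(1) \<open>finite K\<close>] assms(2) by simp
  ultimately show ?thesis
    unfolding eventually_avoids_def by auto
qed

end

section \<open>The ideal BI and Katetov reductions\<close>

definition cell :: "nat \<times> nat \<times> nat \<Rightarrow> nat \<times> nat" where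
  "cell x = (fst x, fst (snd x))"

lemma finite_cell_slice: "finite (B \<inter> cell -` {(i, j)}) \<longleftrightarrow> finite {k. (i, j, k) \<in> B}"
proof -
  have "B \<inter> cell -` {(i, j)} = (\<lambda>k. (i, j, k)) ` {k. (i, j, k) \<in> B}"
    unfolding cell_def by force
  then show ?thesis
    by (simp add: finite_image_iff inj_on_def)
qed

lemma finite_column_slice: "finite (B \<inter> cell -` ({i} \<times> UNIV)) \<longleftrightarrow> finite {(j, k). (i, j, k) \<in> B}"
proof -
  have "B \<inter> cell -` ({i} \<times> UNIV) = Pair i ` {(j, k). (i, j, k) \<in> B}"
    unfolding cell_def by force
  then show ?thesis
    by (simp add: finite_image_iff inj_on_def)
qed

lemma finite_in_FIN2: "finite C \<Longrightarrow> C \<in> FIN2"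
  unfolding FIN2_def
proof (intro CollectI exI[of _ 0] allI impI)
  fix i assume "finite C"
  have "{j. (i, j) \<in> C} \<subseteq> snd ` C"
    by force
  then show "finite {j. (i, j) \<in> C}"
    by (rule finite_subset) (simp add: \<open>finite C\<close>)
qed

lemma BI_iff:
  "B \<in> BI \<longleftrightarrow>
     (\<forall>i. \<exists>j0. \<forall>j\<ge>j0. finite (B \<inter> cell -` {(i, j)})) \<and>
     (\<exists>i0. \<forall>i\<ge>i0. finite (B \<inter> cell -` ({i} \<times> UNIV)))"
proof -
  have column_FIN2: "{(j, k). (i, j, k) \<in> B} \<in> FIN2 \<longleftrightarrow> (\<exists>j0. \<forall>j\<ge>j0. finite (B \<inter> cell -` {(i, j)}))"
    for i
    unfolding FIN2_def finite_cell_slice by simp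
  have finite_column_FIN2: "finite (B \<inter> cell -` ({i} \<times> UNIV)) \<Longrightarrow> {(j, k). (i, j, k) \<in> B} \<in> FIN2"
    for i
    unfolding finite_column_slice by (rule finite_in_FIN2)
  show ?thesis
  proof
    assume "B \<in> BI"
    then obtain i0 where low: "\<And>i. i < i0 \<Longrightarrow> {(j, k). (i, j, k) \<in> B} \<in> FIN2"
      and high: "\<And>i. i \<ge> i0 \<Longrightarrow> finite (B \<inter> cell -` ({i} \<times> UNIV))"
      unfolding BI_def finite_column_slice by blast
    have "{(j, k). (i, j, k) \<in> B} \<in> FIN2" for i
      using low high finite_column_FIN2 by (cases "i < i0") auto
    with high show "(\<forall>i. \<exists>j0. \<forall>j\<ge>j0. finite (B \<inter> cell -` {(i, j)})) \<and>
        (\<exists>i0. \<forall>i\<ge>i0. finite (B \<inter> cell -` ({i} \<times> UNIV)))"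
      unfolding column_FIN2 by blast
  next
    assume "(\<forall>i. \<exists>j0. \<forall>j\<ge>j0. finite (B \<inter> cell -` {(i, j)})) \<and>
        (\<exists>i0. \<forall>i\<ge>i0. finite (B \<inter> cell -` ({i} \<times> UNIV)))"
    then show "B \<in> BI"
      unfolding BI_def column_FIN2[symmetric] finite_column_slice by blast
  qed
qed

lemma BI_intro:
  assumes "\<And>p. p \<noteq> p0 \<Longrightarrow> finite (B \<inter> cell -` {p})"
    and "\<And>i. i > i0 \<Longrightarrow> finite (B \<inter> cell -` ({i} \<times> UNIV))"
  shows "B \<in> BI"
  unfolding BI_iff
proof
  show "\<forall>i. \<exists>j0. \<forall>j\<ge>j0. finite (B \<inter> cell -` {(i, j)})"
    using assms(1) by (metis Suc_n_not_le_n prod.inject prod.collapse)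
  show "\<exists>i0. \<forall>i\<ge>i0. finite (B \<inter> cell -` ({i} \<times> UNIV))"
    using assms(2) Suc_le_lessD by blast
qed

lemma not_in_BI:
  assumes "infinite {i. infinite (B \<inter> cell -` ({i} \<times> UNIV))}
      \<or> (\<exists>i. infinite {j. infinite (B \<inter> cell -` {(i, j)})})"
  shows "B \<notin> BI"
proof
  assume "B \<in> BI"
  then obtain i0 where rows: "\<And>i. \<exists>j0. \<forall>j\<ge>j0. finite (B \<inter> cell -` {(i, j)})"
    and columns: "\<And>i. i \<ge> i0 \<Longrightarrow> finite (B \<inter> cell -` ({i} \<times> UNIV))"
    unfolding BI_iff by blast
  have "{i. infinite (B \<inter> cell -` ({i} \<times> UNIV))} \<subseteq> {..<i0}"
    using columns not_less by blast
  moreover have "finite {j. infinite (B \<inter> cell -` {(i, j)})}" for i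
  proof -
    obtain j0 where "\<forall>j\<ge>j0. finite (B \<inter> cell -` {(i, j)})"
      using rows by blast
    then have "{j. infinite (B \<inter> cell -` {(i, j)})} \<subseteq> {..<j0}"
      using not_less by blast
    then show ?thesis
      by (rule finite_subset) simp
  qed
  ultimately show False
    using assms finite_subset by blast
qed

lemma katetov_trace:
  assumes "katetov_le (ideal_plus I) rho_ideal Fam rho"
  obtains f where
    "\<And>F. F \<in> Fam \<Longrightarrow> \<exists>B. B \<notin> I \<and> (\<forall>S. eventually_avoids rho F (f -` S) \<longrightarrow> finite (B \<inter> S))"
proof -
  obtain f where f: "\<forall>F\<in>Fam. \<exists>B\<in>ideal_plus I. \<forall>K. finite K \<longrightarrow>
      (\<exists>K'. finite K' \<and> rho_ideal (B - K') \<subseteq> f ` rho (F - K))"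
    using assms unfolding katetov_le_def by blast
  have "\<exists>B. B \<notin> I \<and> (\<forall>S. eventually_avoids rho F (f -` S) \<longrightarrow> finite (B \<inter> S))"
    if F: "F \<in> Fam" for F
  proof -
    obtain B where "B \<notin> I"
      and B: "\<forall>K. finite K \<longrightarrow> (\<exists>K'. finite K' \<and> B - K' \<subseteq> f ` rho (F - K))"
      using f F unfolding ideal_plus_def rho_ideal_def by auto
    have "finite (B \<inter> S)" if avoids: "eventually_avoids rho F (f -` S)" for S
    proof -
      obtain K where "finite K" and K: "rho (F - K) \<inter> f -` S = {}"
        using avoids unfolding eventually_avoids_def by blast
      with B obtain K' where "finite K'" and K': "B - K' \<subseteq> f ` rho (F - K)"
        by metis
      have "f ` rho (F - K) \<inter> S = {}"
        using K by auto
      with K' have "B \<inter> S \<subseteq> K'"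
        by auto
      then show ?thesis
        using \<open>finite K'\<close> by (rule finite_subset)
    qed
    with \<open>B \<notin> I\<close> show ?thesis
      by blast
  qed
  then show ?thesis
    by (rule that)
qed

lemma katetov_BI_obstruction:
  fixes rho :: "'o set \<Rightarrow> 'l set"
  assumes "katetov_le (ideal_plus BI) rho_ideal Fam rho"
  obtains g :: "'l \<Rightarrow> nat \<times> nat" where
    "\<And>F p0 i0. F \<in> Fam \<Longrightarrow> \<forall>p. p \<noteq> p0 \<longrightarrow> eventually_avoids rho F (g -` {p}) \<Longrightarrow>
      \<forall>i>i0. eventually_avoids rho F (g -` ({i} \<times> UNIV)) \<Longrightarrow> False"
proof -
  obtain f where trace: "\<And>F. F \<in> Fam \<Longrightarrow>
      \<exists>B. B \<notin> BI \<and> (\<forall>S. eventually_avoids rho F (f -` S) \<longrightarrow> finite (B \<inter> S))"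
    using katetov_trace[OF assms] by blast
  have False if "F \<in> Fam" and cells: "\<forall>p. p \<noteq> p0 \<longrightarrow> eventually_avoids rho F ((cell \<circ> f) -` {p})"
    and columns: "\<forall>i>i0. eventually_avoids rho F ((cell \<circ> f) -` ({i} \<times> UNIV))" for F p0 i0
  proof -
    obtain B where "B \<notin> BI" and B: "\<And>S. eventually_avoids rho F (f -` S) \<Longrightarrow> finite (B \<inter> S)"
      using trace[OF \<open>F \<in> Fam\<close>] by blast
    have "B \<in> BI"
    proof (rule BI_intro[of p0 _ i0])
      show "finite (B \<inter> cell -` {p})" if "p \<noteq> p0" for p
        using B[of "cell -` {p}"] cells[rule_format, OF that] by (simp add: vimage_comp)
      show "finite (B \<inter> cell -` ({i} \<times> UNIV))" if "i > i0" for i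
        using B[of "cell -` ({i} \<times> UNIV)"] columns[rule_format, OF that] by (simp add: vimage_comp)
    qed
    with \<open>B \<notin> BI\<close> show False
      by contradiction
  qed
  then show ?thesis
    by (rule that) blast+
qed

theorem not_P2_minus_if_katetov_BI:
  fixes rho :: "'o set \<Rightarrow> 'l set"
  assumes "katetov_le (ideal_plus BI) rho_ideal Fam rho"
  shows "\<not> P2_minus Fam rho"
proof
  obtain g :: "'l \<Rightarrow> nat \<times> nat" where obstruction: "\<And>F p0 i0. F \<in> Fam \<Longrightarrow>
      \<forall>p. p \<noteq> p0 \<longrightarrow> eventually_avoids rho F (g -` {p}) \<Longrightarrow>
      \<forall>i>i0. eventually_avoids rho F (g -` ({i} \<times> UNIV)) \<Longrightarrow> False"
    using katetov_BI_obstruction[OF assms] by blast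
  have "g -` {p} \<in> I_rho Fam rho" for p
    unfolding I_rho_def
  proof (clarify)
    fix F assume "F \<in> Fam" "rho F \<subseteq> g -` {p}"
    then have avoid: "eventually_avoids rho F Y" if "Y \<inter> g -` {p} = {}" for Y
      using that unfolding eventually_avoids_def by (intro exI[of _ "{}"]) auto
    show False
    proof (rule obstruction[OF \<open>F \<in> Fam\<close>, of p "fst p"])
      show "\<forall>q. q \<noteq> p \<longrightarrow> eventually_avoids rho F (g -` {q})"
        by (auto intro: avoid)
      show "\<forall>i>fst p. eventually_avoids rho F (g -` ({i} \<times> UNIV))"
        by (auto intro!: avoid)
    qed
  qed
  moreover assume "P2_minus Fam rho"
  ultimately obtain F where "F \<in> Fam" "P2_witness rho g F"
    unfolding P2_minus_iff by blast
  then show False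
    unfolding P2_witness_def using obstruction by blast
qed

lemma diagonal_pseudo_intersection:
  fixes R :: "nat \<Rightarrow> 'a set" and Y :: "nat \<Rightarrow> 'a set"
  assumes antimono: "\<And>m m'. m \<le> m' \<Longrightarrow> R m' \<subseteq> R m"
    and vanish: "\<And>a. \<exists>m. a \<notin> R m"
    and hit: "\<And>n m. n \<in> J \<Longrightarrow> Y n \<inter> R m \<noteq> {}"
  shows "\<exists>Z. (\<forall>m. finite (Z - R m)) \<and> (\<forall>n\<in>J. infinite (Z \<inter> Y n))"
proof -
  define q where "q n m = (SOME a. a \<in> Y n \<inter> R m)" for n m
  have q: "q n m \<in> Y n \<inter> R m" if "n \<in> J" for n m
    unfolding q_def using hit[OF that, of m] by (metis all_not_in_conv someI)
  define Z where "Z = {q n m | n m. n \<in> J \<and> n \<le> m}"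
  have "finite (Z - R m)" for m
  proof -
    have "Z - R m \<subseteq> (\<lambda>(n, m'). q n m') ` ({..<m} \<times> {..<m})"
    proof
      fix a assume "a \<in> Z - R m"
      then obtain n m' where a: "a = q n m'" "n \<in> J" "n \<le> m'" "a \<notin> R m"
        unfolding Z_def by blast
      have "m' < m"
      proof (rule ccontr)
        assume "\<not> m' < m"
        then have "R m' \<subseteq> R m"
          using antimono by simp
        with q[OF a(2), of m'] a show False
          by auto
      qed
      with a show "a \<in> (\<lambda>(n, m'). q n m') ` ({..<m} \<times> {..<m})"
        by force
    qed
    then show ?thesis
      by (rule finite_subset) auto
  qed
  moreover have "infinite (Z \<inter> Y n)" if n: "n \<in> J" for n
  proof
    assume fin: "finite (Z \<inter> Y n)"
    obtain exit where exit: "\<And>a. a \<notin> R (exit a)"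
      using vanish by metis
    define M where "M = Max (insert n (exit ` (Z \<inter> Y n)))"
    have M: "n \<le> M" "\<And>a. a \<in> Z \<inter> Y n \<Longrightarrow> exit a \<le> M"
      unfolding M_def using fin by simp_all
    have "q n M \<in> Z \<inter> Y n"
      using q[OF n, of M] M(1) n unfolding Z_def by blast
    then have "R M \<subseteq> R (exit (q n M))"
      by (intro antimono M(2))
    with exit[of "q n M"] q[OF n, of M] show False
      by auto
  qed
  ultimately show ?thesis
    by blast
qed

lemma finite_subset_prefix_from_nat_into:
  assumes "countable (UNIV :: 'a set)" "finite (K :: 'a set)"
  shows "\<exists>m. K \<subseteq> from_nat_into UNIV ` {..<m}"
proof -
  obtain m where m: "to_nat_on UNIV ` K \<subseteq> {..<m}"
    using finite_nat_bounded assms(2) by blast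
  have "K \<subseteq> from_nat_into UNIV ` {..<m}"
  proof
    fix x assume "x \<in> K"
    have "x = from_nat_into UNIV (to_nat_on UNIV x)"
      using from_nat_into_to_nat_on[OF assms(1)] by simp
    moreover have "to_nat_on UNIV x \<in> {..<m}"
      using m \<open>x \<in> K\<close> by blast
    ultimately show "x \<in> from_nat_into UNIV ` {..<m}"
      by (rule image_eqI)
  qed
  then show ?thesis
    by blast
qed

lemma image_notin_BI:
  assumes "inj f"
    and "infinite {i. infinite (Z \<inter> f -` cell -` ({i} \<times> UNIV))}
      \<or> (\<exists>i. infinite {j. infinite (Z \<inter> f -` cell -` {(i, j)})})"
  shows "f ` Z \<notin> BI"
proof (rule not_in_BI)
  have "finite (f ` Z \<inter> S) \<longleftrightarrow> finite (Z \<inter> f -` S)" for S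
  proof -
    have "f ` Z \<inter> S = f ` (Z \<inter> f -` S)"
      by auto
    then show ?thesis
      using assms(1) by (simp add: finite_image_iff inj_on_subset)
  qed
  with assms(2) show "infinite {i. infinite (f ` Z \<inter> cell -` ({i} \<times> UNIV))}
      \<or> (\<exists>i. infinite {j. infinite (f ` Z \<inter> cell -` {(i, j)})})"
    by simp
qed

context partition_regular_fn
begin

lemma exists_pseudo_intersection_of_tails:
  fixes J :: "nat set"
  assumes "countable (UNIV :: 'o set)" "F \<in> Fam" "tails_vanish rho F"
    and hit: "\<And>n. n \<in> J \<Longrightarrow> \<not> eventually_avoids rho F (Y n)"
  shows "\<exists>Z. (\<forall>K. finite K \<longrightarrow> finite (Z - rho (F - K))) \<and> (\<forall>n\<in>J. infinite (Z \<inter> Y n))"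
proof -
  define prefix where "prefix m = from_nat_into (UNIV :: 'o set) ` {..<m}" for m
  define R where "R m = rho (F - prefix m)" for m
  have R_tail: "R m \<subseteq> rho (F - K)" if "K \<subseteq> prefix m" for K m
    unfolding R_def using that by (intro rho_tail_antimono[OF assms(2)]) (simp_all add: prefix_def)
  have exhaust: "\<exists>m. R m \<subseteq> rho (F - K)" if "finite K" for K
    using finite_subset_prefix_from_nat_into[OF assms(1) that] R_tail unfolding prefix_def by blast
  have "\<exists>Z. (\<forall>m. finite (Z - R m)) \<and> (\<forall>n\<in>J. infinite (Z \<inter> Y n))"
  proof (rule diagonal_pseudo_intersection)
    show "R m' \<subseteq> R m" if "m \<le> m'" for m m'
    proof -
      have "R m' \<subseteq> rho (F - prefix m)"
        using that by (intro R_tail) (auto simp: prefix_def)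
      then show ?thesis
        unfolding R_def[of m] .
    qed
    show "\<exists>m. a \<notin> R m" for a
    proof -
      obtain K where "finite K" "a \<notin> rho (F - K)"
        using assms(3) unfolding tails_vanish_def by blast
      with exhaust show ?thesis
        by blast
    qed
    show "Y n \<inter> R m \<noteq> {}" if "n \<in> J" for n m
      using hit[OF that] unfolding eventually_avoids_def R_def prefix_def by blast
  qed
  then obtain Z where Z: "\<And>m. finite (Z - R m)" and "\<forall>n\<in>J. infinite (Z \<inter> Y n)"
    by blast
  moreover have "finite (Z - rho (F - K))" if K: "finite K" for K
  proof -
    obtain m where "R m \<subseteq> rho (F - K)"
      using exhaust[OF K] by blast
    then show ?thesis
      by (rule finite_subset[OF Diff_mono[OF order_refl] Z])
  qed
  ultimately show ?thesis
    by blast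
qed

lemma katetov_cover_of_pseudo_intersection:
  assumes "F \<in> Fam" "F1 \<in> Fam" "F \<subseteq> F1" "\<And>K. finite K \<Longrightarrow> finite (Z - rho (F - K))"
    and "f ` Z \<notin> I"
  shows "\<exists>B\<in>ideal_plus I. \<forall>K1. finite K1 \<longrightarrow>
    (\<exists>K2. finite K2 \<and> rho_ideal (B - K2) \<subseteq> f ` rho (F1 - K1))"
proof (intro bexI[of _ "f ` Z"] allI impI exI conjI)
  show "f ` Z \<in> ideal_plus I"
    unfolding ideal_plus_def using assms(5) by simp
  fix K1 :: "'o set" assume "finite K1"
  then show "finite (f ` (Z - rho (F - K1)))"
    using assms(4) by simp
  have "rho (F - K1) \<subseteq> rho (F1 - K1)"
    using assms \<open>finite K1\<close> by (intro rho_mono diff_finite_in_Fam) auto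
  then show "rho_ideal (f ` Z - f ` (Z - rho (F - K1))) \<subseteq> f ` rho (F1 - K1)"
    unfolding rho_ideal_def by auto
qed

text \<open>Removing from \<open>\<rho>(F)\<close> the finitely many cells that no tail of \<open>F\<close> avoids would, by
  (S1), leave a witness.\<close>

lemma infinitely_many_unavoided_cells:
  assumes S1: "\<And>A. A \<in> I_rho Fam rho \<Longrightarrow> \<exists>G\<in>Fam. rho G \<subseteq> rho F - A \<and> tails_refine rho G F"
    and small: "\<And>p. g -` {p} \<in> I_rho Fam rho"
    and no_witness: "\<not> (\<exists>G\<in>Fam. P2_witness rho g G)"
  shows "infinite {i. \<not> eventually_avoids rho F (g -` ({i} \<times> UNIV))}
    \<or> (\<exists>i. infinite {j. \<not> eventually_avoids rho F (g -` {(i, j)})})"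
proof (rule ccontr)
  define H where "H = {i. \<not> eventually_avoids rho F (g -` ({i} \<times> UNIV))}"
  define J where "J i = {j. \<not> eventually_avoids rho F (g -` {(i, j)})}" for i
  assume "\<not> ?thesis"
  then have "finite H" "\<And>i. finite (J i)"
    unfolding H_def J_def by auto
  then have "finite (Sigma H J)"
    by blast
  then have "(\<Union>p\<in>Sigma H J. g -` {p}) \<in> I_rho Fam rho"
    using small by (rule I_rho_UN)
  then obtain G where "G \<in> Fam" and G: "rho G \<subseteq> rho F - (\<Union>p\<in>Sigma H J. g -` {p})"
    and tails: "tails_refine rho G F"
    using S1 by blast
  have cells: "eventually_avoids rho G (g -` {p})" for p
  proof (cases "p \<in> Sigma H J")
    case True
    with G have "rho (G - {}) \<inter> g -` {p} = {}"
      by auto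
    then show ?thesis
      unfolding eventually_avoids_def by blast
  next
    case False
    then consider "fst p \<notin> H" | "snd p \<notin> J (fst p)"
      by (metis SigmaI prod.collapse)
    then have "eventually_avoids rho F (g -` {p})"
    proof cases
      case 1
      then have "eventually_avoids rho F (g -` ({fst p} \<times> UNIV))"
        unfolding H_def by simp
      then show ?thesis
        by (rule eventually_avoids_subset) (auto simp: mem_Times_iff)
    next
      case 2
      then show ?thesis
        unfolding J_def by simp
    qed
    with tails show ?thesis
      by (rule eventually_avoids_if_tails_refine)
  qed
  obtain i0 where "H \<subseteq> {..<i0}"
    using finite_nat_bounded[OF \<open>finite H\<close>] by blast
  then have "eventually_avoids rho G (g -` ({i} \<times> UNIV))" if "i > i0" for i
    using that eventually_avoids_if_tails_refine[OF tails] unfolding H_def by force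
  with cells \<open>G \<in> Fam\<close> no_witness show False
    unfolding P2_witness_def by blast
qed

lemma exists_BI_positive_pseudo_intersection:
  assumes "countable (UNIV :: 'o set)" "F \<in> Fam" "tails_vanish rho F"
    and S1: "\<And>A. A \<in> I_rho Fam rho \<Longrightarrow> \<exists>G\<in>Fam. rho G \<subseteq> rho F - A \<and> tails_refine rho G F"
    and "\<And>p. g -` {p} \<in> I_rho Fam rho" "\<not> (\<exists>G\<in>Fam. P2_witness rho g G)"
    and "inj f" "cell \<circ> f = g"
  shows "\<exists>Z. (\<forall>K. finite K \<longrightarrow> finite (Z - rho (F - K))) \<and> f ` Z \<notin> BI"
proof -
  note pseudo = exists_pseudo_intersection_of_tails[OF assms(1-3)]
  have preimage: "f -` cell -` S = g -` S" for S
    using assms(8) by auto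
  from infinitely_many_unavoided_cells[OF S1 assms(5,6)] show ?thesis
  proof
    define H where "H = {i. \<not> eventually_avoids rho F (g -` ({i} \<times> UNIV))}"
    assume "infinite {i. \<not> eventually_avoids rho F (g -` ({i} \<times> UNIV))}"
    then have "infinite H"
      unfolding H_def .
    obtain Z where "\<forall>K. finite K \<longrightarrow> finite (Z - rho (F - K))"
      and Z: "\<forall>i\<in>H. infinite (Z \<inter> g -` ({i} \<times> UNIV))"
      using pseudo[of H "\<lambda>i. g -` ({i} \<times> UNIV)"] unfolding H_def by auto
    moreover have "infinite {i. infinite (Z \<inter> f -` cell -` ({i} \<times> UNIV))}"
      by (rule infinite_super[OF _ \<open>infinite H\<close>]) (use Z in \<open>auto simp: preimage\<close>)
    ultimately show ?thesis
      using image_notin_BI[OF \<open>inj f\<close>] by blast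
  next
    assume "\<exists>i. infinite {j. \<not> eventually_avoids rho F (g -` {(i, j)})}"
    then obtain i J where "infinite J" and J: "J = {j. \<not> eventually_avoids rho F (g -` {(i, j)})}"
      by blast
    obtain Z where "\<forall>K. finite K \<longrightarrow> finite (Z - rho (F - K))"
      and Z: "\<forall>j\<in>J. infinite (Z \<inter> g -` {(i, j)})"
      using pseudo[of J "\<lambda>j. g -` {(i, j)}"] unfolding J by auto
    moreover have "infinite {j. infinite (Z \<inter> f -` cell -` {(i, j)})}"
      by (rule infinite_super[OF _ \<open>infinite J\<close>]) (use Z in \<open>auto simp: preimage\<close>)
    ultimately show ?thesis
      using image_notin_BI[OF \<open>inj f\<close>] by blast
  qed
qed

theorem katetov_BI_if_not_P2_minus:
  assumes "countable (UNIV :: 'o set)" "countable (UNIV :: 'l set)"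
    and "S1 Fam rho" "\<not> P2_minus Fam rho"
  shows "katetov_le (ideal_plus BI) rho_ideal Fam rho"
proof -
  obtain g where small: "\<And>p. g -` {p} \<in> I_rho Fam rho"
    and no_witness: "\<not> (\<exists>G\<in>Fam. P2_witness rho g G)"
    using assms(4) unfolding P2_minus_iff by blast
  \<comment> \<open>The third coordinate only serves to make \<open>f\<close> injective.\<close>
  define f where "f a = (fst (g a), snd (g a), to_nat_on (UNIV :: 'l set) a)" for a
  have "inj f"
    using inj_on_to_nat_on[OF assms(2)] unfolding f_def inj_def by auto
  have "cell \<circ> f = g"
    unfolding f_def cell_def by auto
  show ?thesis
    unfolding katetov_le_def
  proof (intro exI[of _ f] ballI)
    fix F1 assume "F1 \<in> Fam"
    then obtain E where "E \<in> Fam" "E \<subseteq> F1" "tails_vanish rho E"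
      using exists_tails_vanish by blast
    obtain F where "F \<in> Fam" "F \<subseteq> E"
      and S1: "\<forall>A\<in>I_rho Fam rho. \<exists>G\<in>Fam. rho G \<subseteq> rho F - A \<and> tails_refine rho G F"
      using assms(3)[unfolded S1_def tails_refine_def[symmetric], THEN bspec, OF \<open>E \<in> Fam\<close>]
      by (elim bexE conjE) (rule that)
    have "tails_vanish rho F"
      using \<open>E \<in> Fam\<close> \<open>F \<in> Fam\<close> \<open>F \<subseteq> E\<close> \<open>tails_vanish rho E\<close> by (rule tails_vanish_subset)
    then obtain Z where "\<And>K. finite K \<Longrightarrow> finite (Z - rho (F - K))" "f ` Z \<notin> BI"
      using exists_BI_positive_pseudo_intersection[OF assms(1) \<open>F \<in> Fam\<close> _ S1[rule_format]
          small no_witness \<open>inj f\<close> \<open>cell \<circ> f = g\<close>] by blast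
    moreover have "F \<subseteq> F1"
      using \<open>F \<subseteq> E\<close> \<open>E \<subseteq> F1\<close> by (rule order_trans)
    ultimately show "\<exists>B\<in>ideal_plus BI. \<forall>K1. finite K1 \<longrightarrow>
        (\<exists>K2. finite K2 \<and> rho_ideal (B - K2) \<subseteq> f ` rho (F1 - K1))"
      using katetov_cover_of_pseudo_intersection[OF \<open>F \<in> Fam\<close> \<open>F1 \<in> Fam\<close>] by blast
  qed
qed

end

section \<open>Convergence in \<open>\<omega>\<^sup>2 + 1\<close>\<close>

lemma less_Pt_Pt [simp]: "Pt i j < Pt k l \<longleftrightarrow> i < k \<or> (i = k \<and> j < l)"
  unfolding less_omega2p1_def by auto

lemma Pt_less_Top [simp]: "Pt i j < Top"
  unfolding less_omega2p1_def by auto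

lemma not_Top_less [simp]: "\<not> Top < x"
  unfolding less_omega2p1_def by (cases x) auto

lemma omega2p1_exhaust:
  obtains "x = Top" | "x = Pt 0 0" | i where "x = Pt (Suc i) 0" | i j where "x = Pt i (Suc j)"
proof (cases x)
  case (Pt i j)
  then show ?thesis
    using that by (cases i; cases j) auto
qed simp

lemma open_singleton_Pt_0_0: "open {Pt 0 0}"
proof -
  have "x \<in> {Pt 0 0} \<longleftrightarrow> x \<in> {..<Pt 0 1}" for x
    by (cases x) auto
  then have "{Pt 0 0} = {..<Pt 0 1}"
    by blast
  then show ?thesis
    by simp
qed

lemma open_singleton_Pt_Suc: "open {Pt i (Suc j)}"
proof -
  have "x \<in> {Pt i (Suc j)} \<longleftrightarrow> x \<in> {Pt i j<..<Pt i (Suc (Suc j))}" for x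
    by (cases x) auto
  then have "{Pt i (Suc j)} = {Pt i j<..<Pt i (Suc (Suc j))}"
    by blast
  then show ?thesis
    by simp
qed

lemma P2_witness_if_rho_limit:
  fixes g :: "'l \<Rightarrow> nat \<times> nat"
  assumes conv: "rho_converges euclidean rho (\<lambda>a. Pt (fst (g a)) (Suc (snd (g a)))) F x"
    and "\<not> open {x}"
  shows "P2_witness rho g F"
proof -
  define f where "f a = Pt (fst (g a)) (Suc (snd (g a)))" for a
  have column: "g -` ({i} \<times> UNIV) = f -` range (Pt i)" for i
    unfolding f_def by (auto simp: mem_Times_iff)
  have cell: "g -` {(i, j)} = f -` {Pt i (Suc j)}" for i j
    unfolding f_def by auto
  have avoid: "eventually_avoids rho F Y" if "open U" "x \<in> U" "Y \<subseteq> f -` (- U)" for U Y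
    using rho_converges_avoids[OF conv[folded f_def]] that by (metis eventually_avoids_subset open_openin)
  show ?thesis
  proof (cases x rule: omega2p1_exhaust)
    case 1
    have columns: "eventually_avoids rho F (g -` ({i} \<times> UNIV))" for i
      by (rule avoid[of "{Pt (Suc i) 0<..}"]) (auto simp: 1 column)
    moreover have "eventually_avoids rho F (g -` {p})" for p
      by (rule eventually_avoids_subset[OF columns[of "fst p"]]) (auto simp: mem_Times_iff)
    ultimately show ?thesis
      unfolding P2_witness_def by blast
  next
    case 2
    with assms(2) open_singleton_Pt_0_0 show ?thesis
      by simp
  next
    case (3 i)
    have columns: "eventually_avoids rho F (g -` ({i'} \<times> UNIV))" if "i' \<noteq> i" for i'
      by (rule avoid[of "{Pt i 0<..<Pt (Suc i) 1}"]) (use that in \<open>auto simp: 3 f_def mem_Times_iff\<close>)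
    have cells: "eventually_avoids rho F (g -` {(i', j)})" for i' j
    proof (cases "i' = i")
      case True
      show ?thesis
        by (rule avoid[of "{Pt i (Suc j)<..<Pt (Suc i) 1}"]) (auto simp: 3 cell True)
    next
      case False
      show ?thesis
        by (rule eventually_avoids_subset[OF columns[OF False]]) auto
    qed
    show ?thesis
      unfolding P2_witness_def using cells columns by (metis less_irrefl prod.collapse)
  next
    case (4 i j)
    with assms(2) open_singleton_Pt_Suc show ?thesis
      by simp
  qed
qed

context partition_regular_fn
begin

lemma fibre_notin_I_rho_if_converges_to_isolated:
  assumes "F \<in> Fam" "rho_converges euclidean rho f F x" "open {x}"
  shows "f -` {x} \<notin> I_rho Fam rho"
proof -
  have "eventually_avoids rho F (f -` (- {x}))"
    using rho_converges_avoids assms(2,3) by fastforce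
  then obtain K where "finite K" and "rho (F - K) \<subseteq> f -` {x}"
    unfolding eventually_avoids_def by auto
  then show ?thesis
    using diff_finite_in_Fam[OF assms(1)] unfolding I_rho_def by blast
qed

theorem P2_minus_if_FinBW:
  assumes FinBW: "FinBW Fam rho (euclidean :: omega2p1 topology)"
  shows "P2_minus Fam rho"
  unfolding P2_minus_iff
proof (intro allI impI)
  fix g :: "'l \<Rightarrow> nat \<times> nat"
  assume small: "\<forall>p. g -` {p} \<in> I_rho Fam rho"
  \<comment> \<open>The shift \<open>j + 1\<close> keeps the limit points \<open>\<omega>\<cdot>i\<close> out of the range.\<close>
  define f where "f a = Pt (fst (g a)) (Suc (snd (g a)))" for a
  obtain F x where "F \<in> Fam" and conv: "rho_converges euclidean rho f F x"
    using FinBW[unfolded FinBW_def, THEN spec[of _ f]] by auto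
  have "f -` {y} \<in> I_rho Fam rho" for y
  proof (cases "\<exists>i j. y = Pt i (Suc j)")
    case True
    then obtain i j where "y = Pt i (Suc j)"
      by blast
    then have "f -` {y} = g -` {(i, j)}"
      unfolding f_def by auto
    with small show ?thesis
      by simp
  next
    case False
    then have "f -` {y} = {}"
      unfolding f_def by auto
    then show ?thesis
      using I_rho_empty by simp
  qed
  then have "\<not> open {x}"
    using fibre_notin_I_rho_if_converges_to_isolated[OF \<open>F \<in> Fam\<close> conv] by blast
  with conv have "P2_witness rho g F"
    unfolding f_def by (rule P2_witness_if_rho_limit)
  with \<open>F \<in> Fam\<close> show "\<exists>F\<in>Fam. P2_witness rho g F"
    by blast
qed

lemma rho_converges_from_below:
  fixes f :: "'l \<Rightarrow> 'a::linorder_topology"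
  assumes "G \<in> Fam" "rho G \<subseteq> f -` {..x}" "y0 < x"
    and below: "\<And>y. y < x \<Longrightarrow> eventually_avoids rho G (f -` {..y})"
  shows "rho_converges euclidean rho f G x"
  unfolding rho_converges_def
proof (intro allI impI, elim conjE)
  fix U assume "openin euclidean U" "x \<in> U"
  then obtain b where "b < x" and b: "{b<..x} \<subseteq> U"
    using open_left[of U x y0] assms(3) by auto
  obtain K where "finite K" and K: "rho (G - K) \<inter> f -` {..b} = {}"
    using below[OF \<open>b < x\<close>] unfolding eventually_avoids_def by blast
  have "rho (G - K) \<subseteq> f -` {..x}"
    using rho_tail_subset[OF assms(1) \<open>finite K\<close>] assms(2) by simp
  moreover have "rho (G - K) \<subseteq> f -` {b<..}"
    using K by (auto simp: not_le[symmetric])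
  ultimately have "f ` rho (G - K) \<subseteq> {b<..x}"
    by auto
  with b \<open>finite K\<close> show "\<exists>K. finite K \<and> f ` rho (G - K) \<subseteq> U"
    by blast
qed

lemma rho_converges_to_Top:
  assumes "G \<in> Fam" "rho G \<subseteq> f -` {Pt i0 0..}"
    and columns: "\<And>c. c \<ge> i0 \<Longrightarrow> eventually_avoids rho G (f -` range (Pt c))"
  shows "rho_converges euclidean rho f G Top"
proof (rule rho_converges_from_below[OF assms(1) _ Pt_less_Top])
  show "rho G \<subseteq> f -` {..Top}"
    by (auto intro: less_imp_le elim: omega2p1_exhaust)
  fix y assume "y < Top"
  then obtain n m where y: "y = Pt n m"
    by (cases y) auto
  have "eventually_avoids rho G (\<Union>c\<in>{i0..n}. f -` range (Pt c))"
    by (rule eventually_avoids_UN[OF assms(1)]) (auto intro: columns)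
  moreover have "f -` {..y} \<inter> f -` {Pt i0 0..} \<subseteq> (\<Union>c\<in>{i0..n}. f -` range (Pt c))"
  proof
    fix a assume a: "a \<in> f -` {..y} \<inter> f -` {Pt i0 0..}"
    then obtain c j where "f a = Pt c j"
      using y by (cases "f a") auto
    with a y have "c \<in> {i0..n}" "a \<in> f -` range (Pt c)"
      by auto
    then show "a \<in> (\<Union>c\<in>{i0..n}. f -` range (Pt c))"
      by blast
  qed
  ultimately have "eventually_avoids rho G (f -` {..y} \<inter> f -` {Pt i0 0..})"
    by (rule eventually_avoids_subset)
  then show "eventually_avoids rho G (f -` {..y})"
    by (rule eventually_avoids_restrict[OF assms(1,2)])
qed

lemma rho_converges_to_limit_Pt:
  assumes "G \<in> Fam" "rho G \<subseteq> f -` range (Pt c)"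
    and points: "\<And>j. eventually_avoids rho G (f -` {Pt c j})"
  shows "rho_converges euclidean rho f G (Pt (Suc c) 0)"
proof (rule rho_converges_from_below[of _ _ _ "Pt c 0"])
  show "G \<in> Fam" "Pt c 0 < Pt (Suc c) 0"
    using assms(1) by simp_all
  show "rho G \<subseteq> f -` {..Pt (Suc c) 0}"
    using assms(2) by (auto simp: le_less)
  fix y assume "y < Pt (Suc c) 0"
  then obtain n m where y: "y = Pt n m"
    by (cases y) auto
  have "eventually_avoids rho G (\<Union>j\<in>{..m}. f -` {Pt c j})"
    by (rule eventually_avoids_UN[OF assms(1)]) (auto intro: points)
  moreover have "f -` {..y} \<inter> f -` range (Pt c) \<subseteq> (\<Union>j\<in>{..m}. f -` {Pt c j})"
    using y \<open>y < Pt (Suc c) 0\<close> by auto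
  ultimately have "eventually_avoids rho G (f -` {..y} \<inter> f -` range (Pt c))"
    by (rule eventually_avoids_subset)
  then show "eventually_avoids rho G (f -` {..y})"
    by (rule eventually_avoids_restrict[OF assms(1,2)])
qed

lemma avoiding_witness_for_omega2p1_sequence:
  fixes f :: "'l \<Rightarrow> omega2p1"
  assumes P2: "P2_minus Fam rho" and small: "\<And>y. f -` {y} \<in> I_rho Fam rho"
  obtains F i0 where "F \<in> Fam" "\<And>y. eventually_avoids rho F (f -` {y})"
    "\<And>c. c \<ge> i0 \<Longrightarrow> eventually_avoids rho F (f -` range (Pt c))"
proof -
  \<comment> \<open>Column \<open>c\<close> of \<open>\<omega>\<^sup>2\<close> becomes column \<open>c + 1\<close>, and \<open>\<omega>\<^sup>2\<close> itself the cell \<open>(0, 0)\<close>.\<close>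
  define g where "g a = (case f a of Pt i j \<Rightarrow> (Suc i, j) | Top \<Rightarrow> (0, 0))" for a
  have "\<exists>y. g -` {p} \<subseteq> f -` {y}" for p
  proof (cases "fst p")
    case 0
    then have "g -` {p} \<subseteq> f -` {Top}"
      unfolding g_def by (auto split: omega2p1.splits)
    then show ?thesis
      by blast
  next
    case (Suc c)
    then have "g -` {p} \<subseteq> f -` {Pt c (snd p)}"
      unfolding g_def by (auto split: omega2p1.splits)
    then show ?thesis
      by blast
  qed
  then have "g -` {p} \<in> I_rho Fam rho" for p
    using small I_rho_subset by blast
  then obtain F where "F \<in> Fam" "P2_witness rho g F"
    using P2 unfolding P2_minus_iff by blast
  then obtain i0 where cells: "\<And>p. eventually_avoids rho F (g -` {p})"
    and columns: "\<And>i. i > i0 \<Longrightarrow> eventually_avoids rho F (g -` ({i} \<times> UNIV))"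
    unfolding P2_witness_def by blast
  show ?thesis
  proof (rule that[OF \<open>F \<in> Fam\<close>])
    show "eventually_avoids rho F (f -` {y})" for y
    proof (rule eventually_avoids_subset[OF cells])
      show "f -` {y} \<subseteq> g -` {case y of Pt i j \<Rightarrow> (Suc i, j) | Top \<Rightarrow> (0, 0)}"
        unfolding g_def by auto
    qed
    show "eventually_avoids rho F (f -` range (Pt c))" if "c \<ge> i0" for c
    proof (rule eventually_avoids_subset[OF columns])
      show "Suc c > i0"
        using that by simp
      show "f -` range (Pt c) \<subseteq> g -` ({Suc c} \<times> UNIV)"
        unfolding g_def by auto
    qed
  qed
qed

lemma large_piece_of_omega2p1_sequence:
  fixes f :: "'l \<Rightarrow> omega2p1"
  assumes "F \<in> Fam"
  shows "rho F \<inter> f -` {Pt i0 0..} \<notin> I_rho Fam rho \<or>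
    (\<exists>c<i0. rho F \<inter> f -` range (Pt c) \<notin> I_rho Fam rho)"
proof (rule ccontr)
  have cover: "rho F = (rho F \<inter> f -` {Pt i0 0..}) \<union> (\<Union>c<i0. rho F \<inter> f -` range (Pt c))"
  proof (intro equalityI subsetI)
    fix a assume "a \<in> rho F"
    then show "a \<in> (rho F \<inter> f -` {Pt i0 0..}) \<union> (\<Union>c<i0. rho F \<inter> f -` range (Pt c))"
    proof (cases "f a")
      case (Pt c j)
      with \<open>a \<in> rho F\<close> show ?thesis
        by (cases "c < i0") auto
    qed auto
  qed auto
  assume "\<not> ?thesis"
  then have "(rho F \<inter> f -` {Pt i0 0..}) \<union> (\<Union>c<i0. rho F \<inter> f -` range (Pt c)) \<in> I_rho Fam rho"
    by (intro I_rho_Un I_rho_UN) auto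
  with cover rho_notin_I_rho[OF assms] show False
    by simp
qed

lemma exists_rho_convergent_if_fibres_small:
  fixes f :: "'l \<Rightarrow> omega2p1"
  assumes S2: "S2 Fam rho" and P2: "P2_minus Fam rho"
    and small: "\<And>y. f -` {y} \<in> I_rho Fam rho"
  shows "\<exists>G\<in>Fam. \<exists>x. rho_converges euclidean rho f G x"
proof -
  obtain F0 i0 where "F0 \<in> Fam" and points0: "\<And>y. eventually_avoids rho F0 (f -` {y})"
    and columns0: "\<And>c. c \<ge> i0 \<Longrightarrow> eventually_avoids rho F0 (f -` range (Pt c))"
    using avoiding_witness_for_omega2p1_sequence[OF P2 small] by blast
  obtain F where "F \<in> Fam" "F \<subseteq> F0" and refine: "\<forall>B. B \<subseteq> rho F \<and> B \<notin> I_rho Fam rho \<longrightarrow>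
      (\<exists>G\<in>Fam. rho G \<subseteq> B \<and> tails_refine rho G F)"
    using S2[unfolded S2_def tails_refine_def[symmetric], THEN bspec, OF \<open>F0 \<in> Fam\<close>] by blast
  note to_F = eventually_avoids_subfamily[OF \<open>F \<in> Fam\<close> \<open>F0 \<in> Fam\<close> \<open>F \<subseteq> F0\<close>]
  from large_piece_of_omega2p1_sequence[OF \<open>F \<in> Fam\<close>] show ?thesis
  proof
    assume "rho F \<inter> f -` {Pt i0 0..} \<notin> I_rho Fam rho"
    with refine obtain G where G: "G \<in> Fam" "rho G \<subseteq> f -` {Pt i0 0..}"
      and tails: "tails_refine rho G F"
      by (meson Int_lower1 le_inf_iff)
    have "rho_converges euclidean rho f G Top"
      by (rule rho_converges_to_Top[OF G])
        (rule eventually_avoids_if_tails_refine[OF tails to_F[OF columns0]])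
    with \<open>G \<in> Fam\<close> show ?thesis
      by blast
  next
    assume "\<exists>c<i0. rho F \<inter> f -` range (Pt c) \<notin> I_rho Fam rho"
    with refine obtain c G where G: "G \<in> Fam" "rho G \<subseteq> f -` range (Pt c)"
      and tails: "tails_refine rho G F"
      by (meson Int_lower1 le_inf_iff)
    have "rho_converges euclidean rho f G (Pt (Suc c) 0)"
      by (rule rho_converges_to_limit_Pt[OF G])
        (rule eventually_avoids_if_tails_refine[OF tails to_F[OF points0]])
    with \<open>G \<in> Fam\<close> show ?thesis
      by blast
  qed
qed

theorem FinBW_if_P2_minus:
  assumes "S2 Fam rho" "P2_minus Fam rho"
  shows "FinBW Fam rho (euclidean :: omega2p1 topology)"
  unfolding FinBW_def
proof (intro allI impI)
  fix f :: "'l \<Rightarrow> omega2p1"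
  show "\<exists>F\<in>Fam. \<exists>x\<in>topspace euclidean. rho_converges euclidean rho f F x"
  proof (cases "\<exists>y. f -` {y} \<notin> I_rho Fam rho")
    case True
    then obtain y F where "F \<in> Fam" "rho F \<subseteq> f -` {y}"
      unfolding I_rho_def by blast
    then have "rho_converges euclidean rho f F y"
      unfolding rho_converges_def by (intro allI impI exI[of _ "{}"]) auto
    with \<open>F \<in> Fam\<close> show ?thesis
      by auto
  next
    case False
    then show ?thesis
      using exists_rho_convergent_if_fibres_small[OF assms] by auto
  qed
qed

end

theorem theorem4p2:
  fixes Fam :: "'o set set" and rho :: "'o set \<Rightarrow> 'l set"
  assumes "countable (UNIV :: 'l set)" and "infinite (UNIV :: 'l set)"
    and "countable (UNIV :: 'o set)" and "infinite (UNIV :: 'o set)"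
    and "partition_regular Fam rho"
  shows "(katetov_le (ideal_plus BI) rho_ideal Fam rho \<longrightarrow> \<not> P2_minus Fam rho)
       \<and> (S1 Fam rho \<longrightarrow>
            (katetov_le (ideal_plus BI) rho_ideal Fam rho \<longleftrightarrow> \<not> P2_minus Fam rho))
       \<and> (FinBW Fam rho (euclidean :: omega2p1 topology) \<longrightarrow> P2_minus Fam rho)
       \<and> (S2 Fam rho \<longrightarrow>
            (P2_minus Fam rho \<longleftrightarrow> FinBW Fam rho (euclidean :: omega2p1 topology)))"
proof -
  interpret partition_regular_fn Fam rho
    by (rule partition_regular_fn.intro) (rule assms(5))
  show ?thesis
    using not_P2_minus_if_katetov_BI katetov_BI_if_not_P2_minus[OF assms(3,1)]
      P2_minus_if_FinBW FinBW_if_P2_minus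
    by blast
qed

end
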